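(* Let $q$ be an odd prime power, let $s,t\ge0$ and $k\ge1$ be integers and $n=2k$. Let $\delta,\gamma\in\mathbb{F}_{q^k}$, let $\alpha\in\mathbb{F}_{q^n}$ satisfy $\alpha^{q^k}=-\alpha$ and $\beta\in\mathbb{F}_{q^n}$ satisfy $\beta^{q^k}=-\beta$. Then $$f(x)=\alpha(x^{q^k}+x+\delta)^t+\beta\,\mathrm{Tr}(x)+\gamma x^{q^s}$$ is a permutation polynomial of $\mathbb{F}_{q^n}$ if and only if $\gamma\neq0$.
   Context: $\mathrm{Tr}$ denotes the trace function from $\mathbb{F}_{q^n}$ to $\mathbb{F}_q$, $\mathrm{Tr}(x)=x+x^q+\cdots+x^{q^{n-1}}$. A permutation polynomial of $\mathbb{F}_{q^n}$ is one inducing a bijection of $\mathbb{F}_{q^n}$. *)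

theory Defs
  imports "HOL-Number_Theory.Number_Theory"
begin

definition field_trace :: "nat \<Rightarrow> nat \<Rightarrow> 'a::field \<Rightarrow> 'a" where
  "field_trace q n x = (\<Sum>i<n. x ^ (q ^ i))"

end

theory Submission
  imports Defs "HOL-Computational_Algebra.Polynomial"
begin

text \<open>
  Let Q = q^k and T x = x + x^Q, the trace from GF(q^n) to GF(Q); then Tr = Tr' o T for the
  trace Tr' from GF(Q) to GF(q). Hence f x = g (T x) + \<gamma> x^(q^s) where g (T x) has the form
  \<alpha> a + \<beta> b with a, b in GF(Q). Since x \<mapsto> x^Q negates \<alpha> and \<beta>, T kills g (T x), and
  T (f x) = \<gamma> (T x)^(q^s). If \<gamma> \<noteq> 0, then f x = f y forces T x = T y, hence
  x^(q^s) = y^(q^s) and x = y. If \<gamma> = 0, then f factors through T, which is not injective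
  because its image consists of roots of y^Q = y.
\<close>

lemma finite_field_power_card_eq_self:
  fixes x :: "'a :: {field,finite}"
  shows "x ^ card (UNIV :: 'a set) = x"
proof (cases "x = 0")
  case True
  then show ?thesis
    using finite_UNIV_card_ge_0[where 'a = 'a] by simp
next
  case False
  let ?U = "UNIV - {0 :: 'a}"
  have "x ^ card ?U * \<Prod>?U = (\<Prod>y\<in>?U. x * y)"
    by (simp only: prod.distrib prod_constant)
  also have "\<dots> = 1 * \<Prod>?U"
    by (simp, rule prod.reindex_bij_witness[of _ "\<lambda>y. y / x" "\<lambda>y. x * y"]) (use False in auto)
  finally have power_U: "x ^ card ?U = 1"
    by (rule mult_right_cancel[THEN iffD1, rotated]) simp
  have "card (UNIV :: 'a set) = Suc (card ?U)"
    using card_Suc_Diff1[of UNIV "0 :: 'a"] by simp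
  then show ?thesis
    by (simp only: power_Suc2 power_U mult_1_left)
qed

lemma finite_field_power_card_power_eq_self:
  fixes x :: "'a :: {field,finite}"
  shows "x ^ (card (UNIV :: 'a set) ^ j) = x"
  by (induction j) (simp_all add: finite_field_power_card_eq_self power_mult)

lemma finite_field_prime_CHAR: "prime CHAR('a :: {field,finite})"
  using prime_CHAR_semidom finite_imp_CHAR_pos[where 'a = 'a] by auto

lemma primepow_card_eq_CHAR_power:
  assumes "primepow q" and "card (UNIV :: 'a :: {field,finite} set) = q ^ n" and "n > 0"
  obtains m where "q = CHAR('a) ^ m"
proof -
  obtain r e where r: "prime r" "q = r ^ e"
    using assms(1) by (auto simp: primepow_def)
  have "CHAR('a) dvd r ^ (e * n)"
    using CHAR_dvd_CARD[where 'a = 'a] assms(2) r(2) by (simp add: power_mult)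
  then have "CHAR('a) dvd r"
    using finite_field_prime_CHAR prime_dvd_power by blast
  then have "CHAR('a) = r"
    using finite_field_prime_CHAR r(1) primes_dvd_imp_eq by blast
  then show ?thesis
    using that r(2) by blast
qed

lemma card_ge_two_finite_field: "card (UNIV :: 'a :: {field,finite} set) \<ge> 2"
proof -
  have "card {0, 1 :: 'a} \<le> card (UNIV :: 'a set)"
    by (rule card_mono) auto
  then show ?thesis
    by simp
qed

context
  fixes q m :: nat
  assumes q_CHAR_power: "q = CHAR('a :: {field,finite}) ^ m"
begin

lemma field_trace_zero: "field_trace q n (0 :: 'a) = 0"
proof -
  have "q > 0"
    using q_CHAR_power finite_field_prime_CHAR[where 'a = 'a] by (simp add: prime_gt_0_nat)
  then show ?thesis
    by (simp add: field_trace_def power_0_left)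
qed

lemma frobenius_power_add: "((a :: 'a) + b) ^ (q ^ j) = a ^ (q ^ j) + b ^ (q ^ j)"
  by (rule freshmans_dream'[OF finite_field_prime_CHAR, of _ "m * j"])
     (simp add: q_CHAR_power power_mult)

lemma frobenius_power_sum: "sum (g :: 'b \<Rightarrow> 'a) A ^ (q ^ j) = (\<Sum>i\<in>A. g i ^ (q ^ j))"
  by (rule freshmans_dream_sum'[OF finite_field_prime_CHAR, of _ "m * j"])
     (simp add: q_CHAR_power power_mult)

lemma field_trace_add:
  "field_trace q n ((x :: 'a) + y) = field_trace q n x + field_trace q n y"
  by (simp add: field_trace_def frobenius_power_add sum.distrib)

lemma field_trace_tower:
  "field_trace q (k * d) (x :: 'a) = field_trace q k (field_trace (q ^ k) d x)"
proof (induction d)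
  case 0
  have "field_trace (q ^ k) 0 x = 0"
    by (simp add: field_trace_def)
  then show ?case
    by (simp add: field_trace_zero field_trace_def[of q 0])
next
  case (Suc d)
  have sum_split: "(\<Sum>i<a + b. g i) = (\<Sum>i<b. g i) + (\<Sum>i<a. g (i + b))"
    for a b and g :: "nat \<Rightarrow> 'a"
    by (induction a) (simp_all add: add_ac)
  have "field_trace q (k + k * d) x = field_trace q (k * d) x + (\<Sum>i<k. x ^ (q ^ (i + k * d)))"
    unfolding field_trace_def by (rule sum_split)
  also have "(\<Sum>i<k. x ^ (q ^ (i + k * d))) = field_trace q k (x ^ ((q ^ k) ^ d))"
    by (simp add: field_trace_def power_add mult.commute flip: power_mult)
  also have "field_trace q (k * d) x = field_trace q k (field_trace (q ^ k) d x)"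
    by (rule Suc.IH)
  also have "field_trace q k (field_trace (q ^ k) d x) + field_trace q k (x ^ ((q ^ k) ^ d))
      = field_trace q k (field_trace (q ^ k) (Suc d) x)"
    by (simp add: field_trace_def[of "q ^ k" "Suc d"] field_trace_def[of "q ^ k" d] field_trace_add)
  finally show ?case
    by simp
qed

lemma field_trace_power_self:
  assumes "card (UNIV :: 'a set) = q ^ n"
  shows "field_trace q n (x :: 'a) ^ (q ^ j) = field_trace q n x"
proof (induction j)
  case (Suc j)
  define g where "g i = x ^ (q ^ i)" for i
  have "field_trace q n x ^ q = (\<Sum>i<n. g i ^ q)"
    using frobenius_power_sum[of _ _ 1] by (simp add: field_trace_def g_def)
  also have "\<dots> = (\<Sum>i<n. g (Suc i))"
    by (simp add: g_def mult.commute flip: power_mult)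
  also have "\<dots> = (\<Sum>i<n. g i)"
  proof -
    have "g n = g 0"
      using finite_field_power_card_eq_self[of x] assms by (simp add: g_def)
    then show ?thesis
      using sum.lessThan_Suc_shift[of g n] by (simp add: add.commute)
  qed
  finally have "field_trace q n x ^ q = field_trace q n x"
    by (simp add: field_trace_def g_def)
  then show ?case
    using Suc.IH by (simp add: power_mult)
qed simp

end

lemma field_trace_two: "field_trace Q 2 x = x + x ^ Q"
  by (simp add: field_trace_def numeral_2_eq_2)

lemma inj_power_prime_power:
  assumes "card (UNIV :: 'a :: {field,finite} set) = q ^ n"
  shows "inj (\<lambda>x :: 'a. x ^ (q ^ s))"
proof (rule inj_on_inverseI)
  fix x :: 'a
  have "n \<noteq> 0"
    using assms card_ge_two_finite_field[where 'a = 'a] by (cases n) simp_all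
  then have "(x ^ (q ^ s)) ^ (q ^ (n * s - s)) = x ^ (card (UNIV :: 'a set) ^ s)"
    by (simp add: assms flip: power_mult power_add)
  then show "(x ^ (q ^ s)) ^ (q ^ (n * s - s)) = x"
    by (simp add: finite_field_power_card_power_eq_self)
qed

lemma card_fixed_points_power_le:
  fixes Q :: nat
  assumes "Q \<ge> 2"
  shows "card {y :: 'a :: idom. y ^ Q = y} \<le> Q"
proof -
  define p :: "'a poly" where "p = monom 1 Q + [:0, -1:]"
  have "degree p = Q"
    unfolding p_def using assms by (subst degree_add_eq_left) (auto simp: degree_monom_eq)
  then have "p \<noteq> 0"
    using assms by auto
  moreover have "{x. poly p x = 0} = {y. y ^ Q = y}"
    by (auto simp: p_def poly_monom)
  ultimately show ?thesis
    using card_poly_roots_bound[of p] \<open>degree p = Q\<close> by simp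
qed

lemma not_inj_field_trace_two:
  assumes "q = CHAR('a :: {field,finite}) ^ m" and "card (UNIV :: 'a set) = q ^ 2"
  shows "\<not> inj (field_trace q 2 :: 'a \<Rightarrow> 'a)"
proof
  assume inj: "inj (field_trace q 2 :: 'a \<Rightarrow> 'a)"
  have "q \<ge> 2"
    using card_ge_two_finite_field[where 'a = 'a] assms(2) by (cases "q = 0 \<or> q = 1") auto
  have "q * q = card (range (field_trace q 2 :: 'a \<Rightarrow> 'a))"
    using card_image[OF inj] assms(2) by (simp only: power2_eq_square)
  also have "\<dots> \<le> card {y :: 'a. y ^ q = y}"
    using field_trace_power_self[OF assms(1) assms(2), of _ 1] by (intro card_mono) auto
  also have "\<dots> \<le> q"
    using \<open>q \<ge> 2\<close> by (rule card_fixed_points_power_le)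
  finally have "q * q \<le> q" .
  moreover have "2 * q \<le> q * q"
    using \<open>q \<ge> 2\<close> by (rule mult_right_mono) simp
  ultimately show False
    using \<open>q \<ge> 2\<close> by linarith
qed

lemma field_trace_two_anti_invariant_mult:
  assumes "a ^ Q = - a" and "b ^ Q = b"
  shows "field_trace Q 2 (a * b) = 0"
  using assms by (simp add: field_trace_two power_mult_distrib)

lemma field_trace_two_mult_frobenius:
  assumes "q = CHAR('a :: {field,finite}) ^ m" and "c ^ Q = c"
  shows "field_trace Q 2 (c * (x :: 'a) ^ (q ^ s)) = c * field_trace Q 2 x ^ (q ^ s)"
proof -
  have "(x ^ (q ^ s)) ^ Q = (x ^ Q) ^ (q ^ s)"
    by (simp add: mult.commute flip: power_mult)
  then have "field_trace Q 2 (c * x ^ (q ^ s)) = c * (x ^ (q ^ s) + (x ^ Q) ^ (q ^ s))"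
    using assms(2) by (simp add: field_trace_two power_mult_distrib distrib_left)
  then show ?thesis
    by (simp add: field_trace_two frobenius_power_add[OF assms(1)])
qed

lemma field_trace_two_perm_poly:
  fixes \<alpha> \<beta> \<gamma> \<delta> :: "'a :: {field,finite}"
  assumes q: "q = CHAR('a) ^ m" and card: "card (UNIV :: 'a set) = q ^ (2 * k)"
    and "\<delta> ^ (q ^ k) = \<delta>" and "\<gamma> ^ (q ^ k) = \<gamma>"
    and "\<alpha> ^ (q ^ k) = - \<alpha>" and "\<beta> ^ (q ^ k) = - \<beta>"
  shows "field_trace (q ^ k) 2
           (\<alpha> * (x ^ (q ^ k) + x + \<delta>) ^ t + \<beta> * field_trace q (2 * k) x + \<gamma> * x ^ (q ^ s))
         = \<gamma> * field_trace (q ^ k) 2 x ^ (q ^ s)"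
proof -
  have Q: "q ^ k = CHAR('a) ^ (m * k)" and card_Q: "card (UNIV :: 'a set) = (q ^ k) ^ 2"
    using q card by (simp_all add: power_mult power_mult_distrib mult.commute[of 2])
  have frobenius_Q: "(a + b) ^ (q ^ k) = a ^ (q ^ k) + b ^ (q ^ k)" for a b :: 'a
    using frobenius_power_add[OF Q, of a b 1] by simp
  have "(x ^ (q ^ k) + x + \<delta>) ^ (q ^ k) = x ^ (q ^ k) + x + \<delta>"
    using field_trace_power_self[OF Q card_Q, of x 1] assms(3)
    by (simp only: frobenius_Q field_trace_two power_one_right add.commute)
  then have "((x ^ (q ^ k) + x + \<delta>) ^ t) ^ (q ^ k) = (x ^ (q ^ k) + x + \<delta>) ^ t"
    by (metis power_mult mult.commute)
  moreover have "field_trace q (2 * k) x ^ (q ^ k) = field_trace q (2 * k) x"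
    using field_trace_power_self[OF q card] .
  ultimately show ?thesis
    using assms(4-6)
    by (simp add: field_trace_add[OF Q] field_trace_two_anti_invariant_mult
        field_trace_two_mult_frobenius[OF q])
qed

lemma inj_twisted_factorization_iff:
  fixes \<gamma> :: "'a :: field"
  assumes f: "\<And>x. f x = g (T x) + \<gamma> * \<phi> x" and T_f: "\<And>x. T (f x) = \<gamma> * \<phi> (T x)"
    and "inj \<phi>" and "\<not> inj T"
  shows "inj f \<longleftrightarrow> \<gamma> \<noteq> 0"
proof
  assume "inj f"
  show "\<gamma> \<noteq> 0"
  proof
    assume "\<gamma> = 0"
    then have "f = g \<circ> T"
      by (simp add: f fun_eq_iff)
    then show False
      using \<open>inj f\<close> \<open>\<not> inj T\<close> inj_on_imageI2 by metis
  qed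
next
  assume "\<gamma> \<noteq> 0"
  show "inj f"
  proof (rule injI)
    fix x y
    assume "f x = f y"
    then have "T x = T y"
      using T_f[of x] T_f[of y] \<open>\<gamma> \<noteq> 0\<close> \<open>inj \<phi>\<close> by (simp add: inj_eq)
    then have "\<phi> x = \<phi> y"
      using \<open>f x = f y\<close> \<open>\<gamma> \<noteq> 0\<close> by (simp add: f)
    then show "x = y"
      using \<open>inj \<phi>\<close> by (simp add: inj_eq)
  qed
qed

theorem mainTheorem6:
  fixes q s t k n :: nat and \<alpha> \<beta> \<gamma> \<delta> :: "'a::{field,finite}"
  assumes "primepow q" and "odd q"
    and "k \<ge> 1" and "n = 2 * k"
    and "card (UNIV :: 'a set) = q ^ n"
    and "\<delta> ^ (q ^ k) = \<delta>" and "\<gamma> ^ (q ^ k) = \<gamma>"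
    and "\<alpha> ^ (q ^ k) = - \<alpha>" and "\<beta> ^ (q ^ k) = - \<beta>"
  shows "bij (\<lambda>x. \<alpha> * (x ^ (q ^ k) + x + \<delta>) ^ t + \<beta> * field_trace q n x + \<gamma> * x ^ (q ^ s))
         \<longleftrightarrow> \<gamma> \<noteq> 0"
proof -
  obtain m where q: "q = CHAR('a) ^ m"
    using primepow_card_eq_CHAR_power[OF assms(1) assms(5)] assms(3,4) by auto
  have card: "card (UNIV :: 'a set) = q ^ (2 * k)"
    using assms(4,5) by simp
  have Q: "q ^ k = CHAR('a) ^ (m * k)" and card_Q: "card (UNIV :: 'a set) = (q ^ k) ^ 2"
    using q card by (simp_all add: power_mult power_mult_distrib mult.commute[of 2])
  define T where "T = (field_trace (q ^ k) 2 :: 'a \<Rightarrow> 'a)"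
  define f where "f x = \<alpha> * (x ^ (q ^ k) + x + \<delta>) ^ t + \<beta> * field_trace q n x + \<gamma> * x ^ (q ^ s)"
    for x
  have "f x = \<alpha> * (T x + \<delta>) ^ t + \<beta> * field_trace q k (T x) + \<gamma> * x ^ (q ^ s)" for x
    using field_trace_tower[OF q, of k 2 x]
    by (simp add: f_def T_def field_trace_two assms(4) mult.commute add.commute)
  moreover have "T (f x) = \<gamma> * T x ^ (q ^ s)" for x
    using field_trace_two_perm_poly[OF q card assms(6-9)] by (simp add: f_def T_def assms(4))
  moreover have "\<not> inj T"
    unfolding T_def using Q card_Q by (rule not_inj_field_trace_two)
  ultimately have "inj f \<longleftrightarrow> \<gamma> \<noteq> 0"
    by (intro inj_twisted_factorization_iff[OF _ _ inj_power_prime_power[OF assms(5)]])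
  then show ?thesis
    using finite_UNIV_inj_surj[of f] by (auto simp: bij_def f_def[abs_def])
qed

end
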